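(* Let $(X,d)$ be a metric space with betweenness exponent $t_0=t_0(d)$, and let $W\subseteq X$. Then for every $\varepsilon>0$, $$\mathcal M^*_{2^{1/t_0}\varepsilon}(W)\le \hat{\mathcal N}^X_\varepsilon(W)\le \hat{\mathcal N}_\varepsilon(W)\le \hat{\mathcal M}_\varepsilon(W)\le \mathcal M^*_\varepsilon(W).$$
   Context: Closed balls: $B(c,r)=\{x\in X:d(x,c)\le r\}$. A set $C\subseteq X$ is an $\varepsilon$-net for $W\subseteq X$ if $W\subseteq\bigcup_{c\in C}B(c,\varepsilon)$. A set $A\subseteq X$ is $\varepsilon$-distinguishable if $d(x,y)>\varepsilon$ for all distinct $x,y\in A$. For $W,A\subseteq X$: $\hat{\mathcal N}^A_\varepsilon(W)$ is the minimal cardinality of an $\varepsilon$-net $C$ for $W$ with $C\subseteq A$, and $\hat{\mathcal N}_\varepsilon(W):=\hat{\mathcal N}^W_\varepsilon(W)$. A set $A$ is maximal $\varepsilon$-distinguishable with respect to $W$ if $A\subseteq W$ is $\varepsilon$-distinguishable and no $\varepsilon$-distinguishable $B\subseteq W$ strictly contains $A$. $\hat{\mathcal M}_\varepsilon(W)$ is the smallest cardinality of a maximal $\varepsilon$-distinguishable set with respect to $W$. $\mathcal M^*_\varepsilon(W)$ is the smallest cardinal number that is $\ge \operatorname{card}(A)$ for every $\varepsilon$-distinguishable $A\subseteq W$. The betweenness exponent $t_0(d)\in[1,\infty]$ is the supremum of all $t>0$ for which $(x,y)\mapsto(d(x,y))^t$ is a metric on $X$; $t_0(d)=\infty$ iff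 $d$ is an ultrametric. Convention: $2^{1/\infty}=1$. *)

theory Defs
  imports "HOL-Analysis.Analysis"
begin

text \<open>The metric space (X,d) is the type 'a with its metric dist; X = UNIV.
Cardinal numbers are represented by card_of of sets (well-orders), compared by ordLeq.\<close>

definition is_metric_fun :: "('a \<Rightarrow> 'a \<Rightarrow> real) \<Rightarrow> bool" where
  "is_metric_fun d \<longleftrightarrow> (\<forall>x y. 0 \<le> d x y) \<and> (\<forall>x y. d x y = 0 \<longleftrightarrow> x = y)
     \<and> (\<forall>x y. d x y = d y x) \<and> (\<forall>x y z. d x z \<le> d x y + d y z)"

definition betweenness_exponent :: "'a::metric_space itself \<Rightarrow> ereal" where
  "betweenness_exponent _ = Sup {ereal t |t. t > 0 \<and>
      is_metric_fun (\<lambda>x y::'a. (dist x y) powr t)}"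

definition bfactor :: "'a::metric_space itself \<Rightarrow> real" where
  "bfactor T = (if betweenness_exponent T = \<infinity> then 1
               else 2 powr (1 / real_of_ereal (betweenness_exponent T)))"

definition is_net :: "real \<Rightarrow> 'a::metric_space set \<Rightarrow> 'a set \<Rightarrow> bool" where
  "is_net e W C \<longleftrightarrow> W \<subseteq> (\<Union>c\<in>C. cball c e)"

definition distinguishable :: "real \<Rightarrow> 'a::metric_space set \<Rightarrow> bool" where
  "distinguishable e A \<longleftrightarrow> (\<forall>x\<in>A. \<forall>y\<in>A. x \<noteq> y \<longrightarrow> dist x y > e)"

definition max_distinguishable :: "real \<Rightarrow> 'a::metric_space set \<Rightarrow> 'a set \<Rightarrow> bool" where
  "max_distinguishable e W A \<longleftrightarrow> A \<subseteq> W \<and> distinguishable e A \<and>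
     \<not> (\<exists>B. B \<subseteq> W \<and> distinguishable e B \<and> A \<subset> B)"

definition Nhat_net_in :: "'a::metric_space set \<Rightarrow> real \<Rightarrow> 'a set \<Rightarrow> 'a rel" where
  "Nhat_net_in A e W = card_of (SOME C. C \<subseteq> A \<and> is_net e W C \<and>
      (\<forall>C'. C' \<subseteq> A \<and> is_net e W C' \<longrightarrow> (card_of C, card_of C') \<in> ordLeq))"

definition Nhat_net :: "real \<Rightarrow> 'a::metric_space set \<Rightarrow> 'a rel" where
  "Nhat_net e W = Nhat_net_in W e W"

definition Mhat_dist :: "real \<Rightarrow> 'a::metric_space set \<Rightarrow> 'a rel" where
  "Mhat_dist e W = card_of (SOME A. max_distinguishable e W A \<and>
      (\<forall>B. max_distinguishable e W B \<longrightarrow> (card_of A, card_of B) \<in> ordLeq))"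

text \<open>Smallest cardinal bounding the cardinalities of all e-distinguishable subsets of W.
 Such a cardinal is at most card W, hence representable as card_of of a set of type 'a.\<close>
definition Mstar_dist :: "real \<Rightarrow> 'a::metric_space set \<Rightarrow> 'a rel" where
  "Mstar_dist e W = card_of (SOME S.
      (\<forall>A. A \<subseteq> W \<and> distinguishable e A \<longrightarrow> (card_of A, card_of S) \<in> ordLeq) \<and>
      (\<forall>T::'a set. (\<forall>A. A \<subseteq> W \<and> distinguishable e A \<longrightarrow> (card_of A, card_of T) \<in> ordLeq)
           \<longrightarrow> (card_of S, card_of T) \<in> ordLeq))"

end

theory Submission
  imports Defs
begin

text \<open>
  The cardinal invariants of Defs are defined by Hilbert choice of a set of minimal
  cardinality; since cardinals are well-ordered, such a set exists as soon as the
  defining property has a witness.  The combinatorial content is then: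
  (1) two points of W lying in one closed e-ball are at distance at most 2^{1/t0} e,
      so a 2^{1/t0} e-distinguishable subset of W injects into every e-net for W;
  (2) allowing centres in a larger set can only decrease the minimal net size;
  (3) a maximal e-distinguishable subset of W is an e-net for W with centres in W;
  (4) a maximal e-distinguishable set is in particular e-distinguishable.
  Fact (1) rests on two observations about the betweenness exponent: for every
  admissible exponent t, two points in an e-ball are at distance at most 2^{1/t} e,
  and 2^{1/t0} is the infimum of these factors.
\<close>

text \<open>Cardinals are well-ordered: any satisfiable property of sets has a witness of
  minimal cardinality.\<close>
lemma card_minimal_exists:
  assumes "P x0"
  shows "\<exists>x. P x \<and> (\<forall>y. P y \<longrightarrow> (card_of x, card_of y) \<in> ordLeq)"
proof -
  have "\<exists>r \<in> card_of ` Collect P. \<forall>r' \<in> card_of ` Collect P. (r, r') \<in> ordLeq"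
    by (rule exists_minim_Well_order) (use assms card_of_Well_order in auto)
  then show ?thesis by auto
qed

lemma some_card_minimal:
  assumes "P x0"
  shows "P (SOME x. P x \<and> (\<forall>y. P y \<longrightarrow> (card_of x, card_of y) \<in> ordLeq))"
    and "P y \<Longrightarrow> (card_of (SOME x. P x \<and> (\<forall>y. P y \<longrightarrow> (card_of x, card_of y) \<in> ordLeq)),
                   card_of y) \<in> ordLeq"
  using someI_ex[OF card_minimal_exists[of P, OF assms]] by blast+

lemma Nhat_net_in_eq:
  "Nhat_net_in A e W = card_of (SOME C. (C \<subseteq> A \<and> is_net e W C) \<and>
     (\<forall>C'. (C' \<subseteq> A \<and> is_net e W C') \<longrightarrow> (card_of C, card_of C') \<in> ordLeq))"
  unfolding Nhat_net_in_def by (simp only: conj_assoc)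

lemma Nhat_net_in_attained:
  assumes "C0 \<subseteq> A" "is_net e W C0"
  obtains C where "C \<subseteq> A" "is_net e W C" "Nhat_net_in A e W = card_of C"
proof -
  let ?P = "\<lambda>C. C \<subseteq> A \<and> is_net e W C"
  let ?C = "SOME C. ?P C \<and> (\<forall>C'. ?P C' \<longrightarrow> (card_of C, card_of C') \<in> ordLeq)"
  have "?P ?C" by (rule some_card_minimal(1)[of ?P C0]) (use assms in simp)
  moreover have "Nhat_net_in A e W = card_of ?C" by (rule Nhat_net_in_eq)
  ultimately show thesis using that by blast
qed

lemma Nhat_net_in_least:
  assumes "C \<subseteq> A" "is_net e W C"
  shows "(Nhat_net_in A e W, card_of C) \<in> ordLeq"
  unfolding Nhat_net_in_eq
  by (rule some_card_minimal(2)[where P = "\<lambda>C. C \<subseteq> A \<and> is_net e W C"]) (use assms in simp)+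

text \<open>Zorn's lemma: every W has a maximal e-distinguishable subset.\<close>
lemma max_distinguishable_exists: "\<exists>A. max_distinguishable e W A"
proof -
  let ?F = "{A. A \<subseteq> W \<and> distinguishable e A}"
  have "\<Union>C \<in> ?F" if C: "C \<in> chains ?F" for C
  proof -
    have "dist x y > e" if "x \<in> X" "y \<in> Y" "X \<in> C" "Y \<in> C" "x \<noteq> y" for x y X Y
    proof -
      have "X \<subseteq> Y \<or> Y \<subseteq> X" using C that unfolding chains_def chain_subset_def by auto
      then show ?thesis using C that unfolding chains_def distinguishable_def by blast
    qed
    then have "distinguishable e (\<Union>C)" unfolding distinguishable_def by blast
    moreover have "\<Union>C \<subseteq> W" using C unfolding chains_def by auto
    ultimately show ?thesis by simp
  qed
  then obtain M where M: "M \<in> ?F" "\<forall>X\<in>?F. M \<subseteq> X \<longrightarrow> X = M"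
    using Zorn_Lemma[of ?F] by blast
  then have "max_distinguishable e W M"
    unfolding max_distinguishable_def by blast
  then show ?thesis ..
qed

lemma Mhat_dist_attained:
  obtains A where "max_distinguishable e W A" "Mhat_dist e W = card_of A"
proof -
  obtain A0 where "max_distinguishable e W A0" using max_distinguishable_exists by blast
  then have "max_distinguishable e W (SOME A. max_distinguishable e W A \<and>
      (\<forall>B. max_distinguishable e W B \<longrightarrow> (card_of A, card_of B) \<in> ordLeq))"
    by (rule some_card_minimal(1))
  then show thesis using that unfolding Mhat_dist_def by blast
qed

text \<open>M* bounds every distinguishable subset and is below every such bound.  The set W
  itself is a bound, which makes the choice in the definition well-defined.\<close>
lemma Mstar_dist_bound_exists:
  "\<forall>A. A \<subseteq> W \<and> distinguishable e A \<longrightarrow> (card_of A, card_of W) \<in> ordLeq"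
  by (auto intro: card_of_mono1)

lemma Mstar_dist_upper:
  assumes "A \<subseteq> W" "distinguishable e A"
  shows "(card_of A, Mstar_dist e W) \<in> ordLeq"
proof -
  let ?bound = "\<lambda>T::'a set. \<forall>A. A \<subseteq> W \<and> distinguishable e A \<longrightarrow>
      (card_of A, card_of T) \<in> ordLeq"
  have "?bound (SOME S. ?bound S \<and> (\<forall>T. ?bound T \<longrightarrow> (card_of S, card_of T) \<in> ordLeq))"
    by (rule some_card_minimal(1)) (rule Mstar_dist_bound_exists)
  then show ?thesis using assms unfolding Mstar_dist_def by blast
qed

lemma Mstar_dist_least:
  fixes T W :: "'a::metric_space set"
  assumes "\<And>A. A \<subseteq> W \<Longrightarrow> distinguishable e A \<Longrightarrow> (card_of A, card_of T) \<in> ordLeq"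
  shows "(Mstar_dist e W, card_of T) \<in> ordLeq"
proof -
  let ?bound = "\<lambda>T::'a set. \<forall>A. A \<subseteq> W \<and> distinguishable e A \<longrightarrow>
      (card_of A, card_of T) \<in> ordLeq"
  have "?bound W" "?bound T" using Mstar_dist_bound_exists assms by blast+
  then have "(card_of (SOME S. ?bound S \<and> (\<forall>T. ?bound T \<longrightarrow> (card_of S, card_of T) \<in> ordLeq)),
      card_of T) \<in> ordLeq"
    by (rule some_card_minimal(2))
  then show ?thesis unfolding Mstar_dist_def .
qed

text \<open>The exponent 1 is always admissible, so t0 \<ge> 1 and 2^{1/t0} \<ge> 1.\<close>
lemma betweenness_exponent_ge_1: "betweenness_exponent TYPE('a::metric_space) \<ge> 1"
proof -
  have "is_metric_fun (\<lambda>x y::'a. (dist x y) powr 1)"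
    unfolding is_metric_fun_def by (simp add: dist_commute dist_triangle)
  then have "ereal 1 \<in> {ereal t |t. t > 0 \<and> is_metric_fun (\<lambda>x y::'a. (dist x y) powr t)}"
    by force
  then show ?thesis
    unfolding betweenness_exponent_def one_ereal_def[symmetric] by (rule Sup_upper)
qed

lemma bfactor_ge_1: "bfactor TYPE('a::metric_space) \<ge> 1"
proof (cases "betweenness_exponent TYPE('a) = \<infinity>")
  case False
  with betweenness_exponent_ge_1[where 'a='a] have "real_of_ereal (betweenness_exponent TYPE('a)) \<ge> 1"
    by (cases "betweenness_exponent TYPE('a)") (auto simp: one_ereal_def)
  with False show ?thesis unfolding bfactor_def by (simp add: ge_one_powr_ge_zero)
qed (simp add: bfactor_def)

text \<open>For an admissible exponent t, two points in a closed e-ball are at distance at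
  most 2^{1/t} e: indeed d(a,a')^t \<le> d(a,c)^t + d(c,a')^t \<le> 2 e^t.\<close>
lemma powr_metric_ball_diameter:
  fixes a a' c :: "'a::metric_space"
  assumes t: "t > 0" "is_metric_fun (\<lambda>x y::'a. (dist x y) powr t)"
    and e: "e \<ge> 0" and ac: "dist a c \<le> e" and a'c: "dist a' c \<le> e"
  shows "dist a a' \<le> 2 powr (1 / t) * e"
proof -
  have "dist a a' powr t \<le> dist a c powr t + dist c a' powr t"
    using t(2) unfolding is_metric_fun_def by blast
  also have "\<dots> \<le> e powr t + e powr t"
    using ac a'c t(1) by (intro add_mono powr_mono2) (auto simp: dist_commute)
  finally have "dist a a' powr t \<le> 2 * e powr t" by simp
  then have "(dist a a' powr t) powr (1 / t) \<le> (2 * e powr t) powr (1 / t)"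
    using t(1) by (intro powr_mono2) auto
  then show ?thesis
    using t(1) e by (simp add: powr_powr powr_mult)
qed

lemma bfactor_approximation:
  assumes r: "r > bfactor TYPE('a::metric_space)"
  obtains t where "t > 0" "is_metric_fun (\<lambda>x y::'a. (dist x y) powr t)" "2 powr (1 / t) < r"
proof -
  let ?t0 = "betweenness_exponent TYPE('a)"
  have r1: "r > 1" using r bfactor_ge_1[where 'a='a] by linarith
  define \<tau> where "\<tau> = log r 2"
  have \<tau>_pos: "\<tau> > 0" and r_eq: "2 powr (1 / \<tau>) = r"
    using r1 by (simp_all add: \<tau>_def log_def powr_def)
  have "ereal \<tau> < ?t0"
  proof (cases "?t0 = \<infinity>")
    case False
    then obtain t0 where t0: "?t0 = ereal t0"
      using betweenness_exponent_ge_1[where 'a='a] by (cases ?t0) auto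
    then have t0_ge_1: "t0 \<ge> 1"
      using betweenness_exponent_ge_1[where 'a='a] by (simp add: one_ereal_def)
    have "2 powr (1 / t0) < 2 powr (1 / \<tau>)"
      using r r_eq False t0 unfolding bfactor_def by simp
    then have "1 / t0 < 1 / \<tau>" by simp
    then show ?thesis using t0 t0_ge_1 \<tau>_pos by (simp add: field_simps)
  qed simp
  then obtain t where "t > 0" "is_metric_fun (\<lambda>x y::'a. (dist x y) powr t)" "\<tau> < t"
    unfolding betweenness_exponent_def by (auto simp: less_Sup_iff)
  moreover from \<open>\<tau> < t\<close> have "1 / t < 1 / \<tau>"
    using \<tau>_pos by (simp add: frac_less2)
  then have "2 powr (1 / t) < r" unfolding r_eq[symmetric] by simp
  ultimately show ?thesis using that by blast
qed

lemma ball_diameter_bfactor: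
  fixes a a' c :: "'a::metric_space"
  assumes e: "e > 0" and ac: "dist a c \<le> e" and a'c: "dist a' c \<le> e"
  shows "dist a a' \<le> bfactor TYPE('a) * e"
proof (rule ccontr)
  assume "\<not> ?thesis"
  then have "dist a a' / e > bfactor TYPE('a)" using e by (simp add: field_simps)
  then obtain t where t: "t > 0" "is_metric_fun (\<lambda>x y::'a. (dist x y) powr t)"
      and lt: "2 powr (1 / t) < dist a a' / e"
    by (rule bfactor_approximation)
  have "dist a a' \<le> 2 powr (1 / t) * e"
    using powr_metric_ball_diameter[OF t _ ac a'c] e by simp
  with lt e show False by (simp add: field_simps)
qed

text \<open>A (2^{1/t0} e)-distinguishable subset of W injects into any e-net for W: send each
  point to a centre covering it; two points sharing a centre are too close.\<close>
lemma distinguishable_card_le_net: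
  fixes B C W :: "'a::metric_space set"
  assumes e: "e > 0" and net: "is_net e W C"
    and B: "B \<subseteq> W" "distinguishable (bfactor TYPE('a) * e) B"
  shows "(card_of B, card_of C) \<in> ordLeq"
proof -
  have "\<exists>c. c \<in> C \<and> a \<in> cball c e" if "a \<in> B" for a
    using net B(1) that unfolding is_net_def by blast
  then obtain f where f: "\<And>a. a \<in> B \<Longrightarrow> f a \<in> C \<and> a \<in> cball (f a) e"
    by metis
  have "inj_on f B"
  proof (rule inj_onI, rule ccontr)
    fix x y assume xy: "x \<in> B" "y \<in> B" "f x = f y" "x \<noteq> y"
    have "dist x (f x) \<le> e" using f[OF xy(1)] by (simp add: dist_commute)
    moreover have "dist y (f x) \<le> e" using f[OF xy(2)] xy(3) by (simp add: dist_commute)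
    ultimately have "dist x y \<le> bfactor TYPE('a) * e" by (rule ball_diameter_bfactor[OF e])
    moreover have "dist x y > bfactor TYPE('a) * e"
      using B(2) xy unfolding distinguishable_def by blast
    ultimately show False by simp
  qed
  moreover have "f ` B \<subseteq> C" using f by blast
  ultimately show ?thesis using card_of_ordLeq by blast
qed

lemma Nhat_net_in_antimono:
  assumes "A \<subseteq> A'" "C0 \<subseteq> A" "is_net e W C0"
  shows "(Nhat_net_in A' e W, Nhat_net_in A e W) \<in> ordLeq"
proof -
  obtain C where "C \<subseteq> A" "is_net e W C" "Nhat_net_in A e W = card_of C"
    using Nhat_net_in_attained[OF assms(2,3)] .
  with assms(1) show ?thesis using Nhat_net_in_least[of C A' e W] by auto
qed

text \<open>A maximal e-distinguishable subset of W is an e-net for W: an uncovered point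
  of W could be added to it.\<close>
lemma max_distinguishable_is_net:
  assumes e: "e \<ge> 0" and A: "max_distinguishable e W A"
  shows "is_net e W A"
  unfolding is_net_def
proof
  have AW: "A \<subseteq> W" and dA: "distinguishable e A"
    and maximal: "\<not> (\<exists>B. B \<subseteq> W \<and> distinguishable e B \<and> A \<subset> B)"
    using A unfolding max_distinguishable_def by blast+
  fix w assume w: "w \<in> W"
  show "w \<in> (\<Union>c\<in>A. cball c e)"
  proof (rule ccontr)
    assume "w \<notin> (\<Union>c\<in>A. cball c e)"
    then have far: "\<forall>c\<in>A. dist c w > e" by (auto simp: not_le)
    then have "w \<notin> A" using e by force
    then have "A \<subset> insert w A" by blast
    moreover have "distinguishable e (insert w A)"
      using dA far unfolding distinguishable_def by (simp add: dist_commute)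
    moreover have "insert w A \<subseteq> W" using AW w by blast
    ultimately show False using maximal by blast
  qed
qed

theorem lemma2p6:
  fixes W :: "'a::metric_space set" and e :: real
  assumes "e > 0"
  shows "(Mstar_dist (bfactor TYPE('a) * e) W, Nhat_net_in (UNIV::'a set) e W) \<in> ordLeq
       \<and> (Nhat_net_in (UNIV::'a set) e W, Nhat_net e W) \<in> ordLeq
       \<and> (Nhat_net e W, Mhat_dist e W) \<in> ordLeq
       \<and> (Mhat_dist e W, Mstar_dist e W) \<in> ordLeq"
proof (intro conjI)
  have W_net: "is_net e W W"
    unfolding is_net_def using assms by force
  then obtain C where C: "is_net e W C" "Nhat_net_in UNIV e W = card_of C"
    using Nhat_net_in_attained[of W UNIV] by blast
  have "(Mstar_dist (bfactor TYPE('a) * e) W, card_of C) \<in> ordLeq"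
    by (rule Mstar_dist_least) (rule distinguishable_card_le_net[OF assms C(1)])
  then show "(Mstar_dist (bfactor TYPE('a) * e) W, Nhat_net_in UNIV e W) \<in> ordLeq"
    unfolding C(2) .
  show "(Nhat_net_in UNIV e W, Nhat_net e W) \<in> ordLeq"
    unfolding Nhat_net_def using Nhat_net_in_antimono[OF _ order_refl W_net] by simp
  obtain A where A: "max_distinguishable e W A" "Mhat_dist e W = card_of A"
    by (rule Mhat_dist_attained)
  then have AW: "A \<subseteq> W" and dA: "distinguishable e A"
    unfolding max_distinguishable_def by blast+
  have "is_net e W A" using assms A(1) by (intro max_distinguishable_is_net) auto
  with AW show "(Nhat_net e W, Mhat_dist e W) \<in> ordLeq"
    unfolding Nhat_net_def A(2) by (rule Nhat_net_in_least)
  show "(Mhat_dist e W, Mstar_dist e W) \<in> ordLeq"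
    unfolding A(2) using AW dA by (rule Mstar_dist_upper)
qed

end
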